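(* Let $G$ be a finite group. Then $G$ is an elementary abelian $3$-group if and only if all of the following hold: (a) for every maximal subgroup $M$ of $G$, the non-trivial cosets of $M$ in $G$ are exactly two sets, and each of them is a maximal sum-free set in $G$; (b) every maximal sum-free set in $G$ is a non-trivial coset of some maximal subgroup of $G$; (c) $\Phi(G)=1$, where $\Phi(G)$ denotes the Frattini subgroup of $G$ (the intersection of all maximal subgroups of $G$).
   Context: A non-empty subset $S$ of a group $G$ is called sum-free if for all $s_1,s_2\in S$ (including the case $s_1=s_2$) one has $s_1s_2\notin S$. A maximal sum-free set in a finite group $G$ means a sum-free set of largest possible cardinality among all sum-free sets in $G$ (maximal by cardinality). A non-trivial coset of a subgroup $H$ is a coset $gH$ with $g\notin H$. *)

theory Defs
  imports "HOL-Algebra.Algebra"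
begin

definition sum_free :: "('a, 'b) monoid_scheme \<Rightarrow> 'a set \<Rightarrow> bool" where
  "sum_free G S \<longleftrightarrow> S \<noteq> {} \<and> S \<subseteq> carrier G \<and>
     (\<forall>s1\<in>S. \<forall>s2\<in>S. s1 \<otimes>\<^bsub>G\<^esub> s2 \<notin> S)"

definition max_sum_free :: "('a, 'b) monoid_scheme \<Rightarrow> 'a set \<Rightarrow> bool" where
  "max_sum_free G S \<longleftrightarrow> sum_free G S \<and> (\<forall>T. sum_free G T \<longrightarrow> card T \<le> card S)"

definition maximal_subgroup :: "('a, 'b) monoid_scheme \<Rightarrow> 'a set \<Rightarrow> bool" where
  "maximal_subgroup G M \<longleftrightarrow> subgroup M G \<and> M \<noteq> carrier G \<and>
     (\<forall>H. subgroup H G \<and> M \<subseteq> H \<longrightarrow> H = M \<or> H = carrier G)"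

text \<open>Frattini subgroup: intersection of all maximal subgroups (the whole group if there are none).\<close>
definition frattini :: "('a, 'b) monoid_scheme \<Rightarrow> 'a set" where
  "frattini G = carrier G \<inter> \<Inter>{M. maximal_subgroup G M}"

definition nontrivial_cosets :: "('a, 'b) monoid_scheme \<Rightarrow> 'a set \<Rightarrow> 'a set set" where
  "nontrivial_cosets G M = {g <#\<^bsub>G\<^esub> M | g. g \<in> carrier G \<and> g \<notin> M}"

definition elementary_abelian_3_group :: "('a, 'b) monoid_scheme \<Rightarrow> bool" where
  "elementary_abelian_3_group G \<longleftrightarrow> comm_group G \<and>
     (\<forall>x\<in>carrier G. x [^]\<^bsub>G\<^esub> (3::nat) = \<one>\<^bsub>G\<^esub>)"

end

theory Submission
  imports Defs
begin

(* If G is elementary abelian of exponent 3, a maximal subgroup M has exactly the cosets M, xM and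
   x^2 M, and every element x \<noteq> 1 avoids some maximal subgroup, so the Frattini subgroup is trivial.
   For a sum-free set T and s \<in> T the sets T, sT and sT^-1 are pairwise disjoint, hence
   3|T| \<le> |G|; in case of equality T is closed under (s, t) \<mapsto> (st)^-1, which makes a^-1 T a
   subgroup of index 3 for any a \<in> T.

   Conversely, suppose every maximal subgroup has index 3 and \<Phi>(G) = 1. For a maximal M, G permutes
   the three cosets of M. The elements acting as even permutations form a subgroup of index at most 2;
   it lies in no maximal subgroup, so it is all of G. Thus G acts through the cyclic group A_3, and
   cubes and commutators lie in every maximal subgroup, hence in \<Phi>(G) = 1. *)

lemma permutation_of_three_cases:
  assumes "a \<noteq> b" "b \<noteq> c" "a \<noteq> c" "bij_betw f {a, b, c} {a, b, c}"
  obtains "f a = a" "f b = b" "f c = c" | "f a = b" "f b = c" "f c = a" | "f a = c" "f b = a" "f c = b"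
    | "f a = a" "f b = c" "f c = b" | "f a = c" "f b = b" "f c = a" | "f a = b" "f b = a" "f c = c"
proof -
  have inj: "inj_on f {a, b, c}"
    using assms(4) bij_betw_imp_inj_on by blast
  have "f a \<in> {a, b, c}" "f b \<in> {a, b, c}" "f c \<in> {a, b, c}"
    using bij_betwE[OF assms(4)] by auto
  then have "f a = a \<or> f a = b \<or> f a = c" "f b = a \<or> f b = b \<or> f b = c" "f c = a \<or> f c = b \<or> f c = c"
    by auto
  moreover have "f a \<noteq> f b" "f b \<noteq> f c" "f a \<noteq> f c"
    using assms(1-3) inj_onD[OF inj] by auto
  ultimately show thesis
    using that by (elim disjE) simp_all
qed

(* On a three-element set R, the bijections fixing all or no points are exactly the even
   permutations, i.e. the rotations forming A_3. *)
definition rotation_on :: "('x \<Rightarrow> 'x) \<Rightarrow> 'x set \<Rightarrow> bool" where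
  "rotation_on f R \<longleftrightarrow> (\<forall>c\<in>R. f c = c) \<or> (\<forall>c\<in>R. f c \<noteq> c)"

lemma rotation_on_cong: "(\<And>x. x \<in> R \<Longrightarrow> f x = f' x) \<Longrightarrow> rotation_on f R \<longleftrightarrow> rotation_on f' R"
  unfolding rotation_on_def by auto

lemma rotation_on_three:
  "rotation_on f {a, b, c} \<longleftrightarrow>
     (f a = a \<and> f b = b \<and> f c = c) \<or> (f a \<noteq> a \<and> f b \<noteq> b \<and> f c \<noteq> c)"
  unfolding rotation_on_def by auto

lemma rotation_on_comp_iff:
  assumes "card R = 3" "bij_betw f R R" "bij_betw g R R"
  shows "rotation_on (\<lambda>x. f (g x)) R \<longleftrightarrow> (rotation_on f R \<longleftrightarrow> rotation_on g R)"
proof -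
  obtain a b c where R: "R = {a, b, c}" "a \<noteq> b" "b \<noteq> c" "a \<noteq> c"
    using assms(1) card_3_iff by metis
  have f: "bij_betw f {a, b, c} {a, b, c}" and g: "bij_betw g {a, b, c} {a, b, c}"
    using assms(2,3) R(1) by simp_all
  show ?thesis
    unfolding R(1) rotation_on_three
    by (rule permutation_of_three_cases[OF R(2-4) f]; rule permutation_of_three_cases[OF R(2-4) g];
        simp add: R(2-4) R(2-4)[symmetric])
qed

lemma rotations_commute:
  assumes "card R = 3" "bij_betw f R R" "bij_betw g R R" "rotation_on f R" "rotation_on g R" "x \<in> R"
  shows "f (g x) = g (f x)"
proof -
  obtain a b c where R: "R = {a, b, c}" "a \<noteq> b" "b \<noteq> c" "a \<noteq> c"
    using assms(1) card_3_iff by metis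
  have f: "bij_betw f {a, b, c} {a, b, c}" and g: "bij_betw g {a, b, c} {a, b, c}"
    using assms(2,3) R(1) by simp_all
  have rot: "rotation_on f {a, b, c}" "rotation_on g {a, b, c}" and x: "x \<in> {a, b, c}"
    using assms(4-6) R(1) by simp_all
  show ?thesis
    by (rule permutation_of_three_cases[OF R(2-4) f]; rule permutation_of_three_cases[OF R(2-4) g];
        use rot x in \<open>auto simp: rotation_on_three R(2-4) R(2-4)[symmetric]\<close>)
qed

lemma rotation_cube:
  assumes "card R = 3" "bij_betw f R R" "rotation_on f R" "x \<in> R"
  shows "f (f (f x)) = x"
proof -
  obtain a b c where R: "R = {a, b, c}" "a \<noteq> b" "b \<noteq> c" "a \<noteq> c"
    using assms(1) card_3_iff by metis
  have f: "bij_betw f {a, b, c} {a, b, c}"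
    using assms(2) R(1) by simp
  have rot: "rotation_on f {a, b, c}" and x: "x \<in> {a, b, c}"
    using assms(3,4) R(1) by simp_all
  show ?thesis
    by (rule permutation_of_three_cases[OF R(2-4) f];
        use rot x in \<open>auto simp: rotation_on_three R(2-4) R(2-4)[symmetric]\<close>)
qed

context group
begin

lemma lcos_in_lcosets: "a \<in> carrier G \<Longrightarrow> a <# H \<in> lcosets H"
  unfolding LCOSETS_def by blast

lemma lcos_eq_lcos_iff:
  assumes "subgroup H G" "a \<in> carrier G" "b \<in> carrier G"
  shows "a <# H = b <# H \<longleftrightarrow> inv a \<otimes> b \<in> H"
proof
  assume "a <# H = b <# H"
  then have "b \<in> a <# H" using lcos_self[OF assms(3,1)] by simp
  then show "inv a \<otimes> b \<in> H" using subgroup.lcos_module_imp[OF assms(1) is_group assms(2)] by blast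
next
  assume "inv a \<otimes> b \<in> H"
  then have "b \<in> a <# H" using subgroup.lcos_module_rev[OF assms(1) is_group assms(2,3)] by blast
  then show "a <# H = b <# H" using l_repr_independence[OF _ assms(2,1)] by blast
qed

lemma lcos_eq_self_iff:
  assumes "subgroup H G" "a \<in> carrier G"
  shows "a <# H = H \<longleftrightarrow> a \<in> H"
proof -
  have "a <# H = H \<longleftrightarrow> a <# H = \<one> <# H"
    using lcos_mult_one[OF subgroup.subset[OF assms(1)]] by simp
  also have "\<dots> \<longleftrightarrow> inv a \<in> H"
    using lcos_eq_lcos_iff[OF assms(1,2) one_closed] assms(2) by simp
  also have "\<dots> \<longleftrightarrow> a \<in> H"
    using assms subgroup.m_inv_closed inv_inv by metis
  finally show ?thesis .
qed

lemma card_lcos: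
  assumes "finite (carrier G)" "H \<subseteq> carrier G" "a \<in> carrier G"
  shows "card (a <# H) = card H"
  using l_card_cosets_equal[OF lcos_in_lcosets[OF assms(3)] assms(2,1)] by simp

lemma lcosets_eq_insert_nontrivial_cosets:
  assumes "subgroup H G"
  shows "lcosets H = insert H (nontrivial_cosets G H)" and "H \<notin> nontrivial_cosets G H"
proof -
  have "H \<in> lcosets H"
    using lcos_in_lcosets[OF one_closed, of H] lcos_mult_one[OF subgroup.subset[OF assms]] by simp
  then show "lcosets H = insert H (nontrivial_cosets G H)"
    unfolding LCOSETS_def nontrivial_cosets_def using lcos_eq_self_iff[OF assms] by blast
  show "H \<notin> nontrivial_cosets G H"
    unfolding nontrivial_cosets_def using lcos_eq_self_iff[OF assms] by auto
qed

lemma card_carrier_of_two_nontrivial_cosets: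
  assumes "finite (carrier G)" "subgroup H G" "card (nontrivial_cosets G H) = 2"
  shows "card (lcosets H) = 3" and "card (carrier G) = 3 * card H"
proof -
  have "finite (nontrivial_cosets G H)"
    using assms(3) card.infinite by fastforce
  then show "card (lcosets H) = 3"
    using lcosets_eq_insert_nontrivial_cosets[OF assms(2)] assms(3) by simp
  then show "card (carrier G) = 3 * card H"
    using l_lagrange[OF assms(1,2)] by (simp add: order_def)
qed

lemma subgroup_nat_pow_closed:
  "subgroup H G \<Longrightarrow> h \<in> H \<Longrightarrow> h [^] (n::nat) \<in> H"
  using subgroup_int_pow_closed[of H h "int n"] by (simp add: int_pow_int)

lemma card_subgroup_dvd:
  assumes "subgroup H G" "subgroup K G" "H \<subseteq> K"
  shows "card H dvd card K"
proof -
  have "card (rcosets\<^bsub>G\<lparr>carrier := K\<rparr>\<^esub> H) * card H = card K"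
    using group.lagrange[OF subgroup.subgroup_is_group[OF assms(2) is_group] subgroup_incl[OF assms]]
    by (simp add: order_def)
  then show ?thesis by (metis dvd_triv_right)
qed

(* Inside the group locale plain "prime" refers to Divisibility.prime. *)
lemma maximal_subgroup_of_prime_index:
  assumes "finite (carrier G)" "Factorial_Ring.prime (p::nat)" "subgroup H G" "card (carrier G) = p * card H"
  shows "maximal_subgroup G H"
  unfolding maximal_subgroup_def
proof (intro conjI allI impI)
  have fin_H: "finite H"
    using finite_subset[OF subgroup.subset[OF assms(3)] assms(1)] .
  have pos: "0 < card H"
    using subgroup.one_closed[OF assms(3)] fin_H card_gt_0_iff by blast
  show "H \<noteq> carrier G"
  proof
    assume "H = carrier G"
    then have "p = 1" using assms(4) pos by simp
    then show False using assms(2) by simp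
  qed
  fix K assume "subgroup K G \<and> H \<subseteq> K"
  then have K: "subgroup K G" and HK: "H \<subseteq> K" by auto
  have fin_K: "finite K"
    using finite_subset[OF subgroup.subset[OF K] assms(1)] .
  obtain i where i: "card K = card H * i"
    using card_subgroup_dvd[OF assms(3) K HK] by (rule dvdE)
  obtain j where j: "card (carrier G) = card K * j"
    using card_subgroup_dvd[OF K subgroup_self subgroup.subset[OF K]] by (rule dvdE)
  have "p * card H = card K * j"
    using assms(4) j by simp
  also have "\<dots> = (i * j) * card H"
    using i by (simp add: ac_simps)
  finally have "p = i * j"
    using pos by simp
  then have "Factorial_Ring.prime (i * j)"
    using assms(2) by simp
  then have "i = 1 \<or> j = 1"
    by (rule prime_product)
  then show "K = H \<or> K = carrier G"
  proof
    assume "i = 1"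
    then show ?thesis using i card_seteq[OF fin_K HK] by simp
  next
    assume "j = 1"
    then show ?thesis using j card_seteq[OF assms(1) subgroup.subset[OF K]] by simp
  qed
qed (use assms(3) in simp)

lemma exists_inclusion_maximal_subgroup:
  assumes "finite (carrier G)" "subgroup H G" "P H"
  obtains M where "subgroup M G" "P M" "H \<subseteq> M"
    "\<And>K. subgroup K G \<Longrightarrow> P K \<Longrightarrow> M \<subseteq> K \<Longrightarrow> K = M"
proof -
  define Q where "Q K \<longleftrightarrow> subgroup K G \<and> P K \<and> H \<subseteq> K" for K
  have "\<forall>K. Q K \<longrightarrow> card K < Suc (card (carrier G))"
    unfolding Q_def using assms(1) by (simp add: card_mono le_imp_less_Suc subgroup.subset)
  then obtain M where M: "Q M" and M_greatest: "\<And>K. Q K \<Longrightarrow> card K \<le> card M"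
    using ex_has_greatest_nat[of Q H card] assms(2,3) Q_def by blast
  show thesis
  proof (rule that)
    fix K assume "subgroup K G" "P K" "M \<subseteq> K"
    moreover from this have "finite K"
      using assms(1) finite_subset subgroup.subset by blast
    ultimately show "K = M"
      using M M_greatest[of K] Q_def card_seteq by blast
  qed (use M Q_def in auto)
qed

lemma exists_maximal_subgroup_superset:
  assumes "finite (carrier G)" "subgroup H G" "H \<noteq> carrier G"
  obtains M where "maximal_subgroup G M" "H \<subseteq> M"
proof -
  obtain M where M: "subgroup M G" "M \<noteq> carrier G" "H \<subseteq> M"
    and M_max: "\<And>K. subgroup K G \<Longrightarrow> K \<noteq> carrier G \<Longrightarrow> M \<subseteq> K \<Longrightarrow> K = M"
    using exists_inclusion_maximal_subgroup[of H "\<lambda>K. K \<noteq> carrier G"] assms by blast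
  have "maximal_subgroup G M"
    unfolding maximal_subgroup_def using M M_max by blast
  then show thesis using that M(3) by blast
qed

lemma sum_free_lcos:
  assumes "subgroup H G" "g \<in> carrier G" "g \<notin> H"
  shows "sum_free G (g <# H)"
  unfolding sum_free_def
proof (intro conjI ballI)
  show "g <# H \<noteq> {}" using lcos_self[OF assms(2,1)] by auto
  show "g <# H \<subseteq> carrier G" using l_coset_subset_G assms subgroup.subset by blast
  fix s1 s2 assume "s1 \<in> g <# H" "s2 \<in> g <# H"
  then obtain h1 h2 where h: "h1 \<in> H" "h2 \<in> H" "s1 = g \<otimes> h1" "s2 = g \<otimes> h2"
    unfolding l_coset_def by auto
  have hc: "h1 \<in> carrier G" "h2 \<in> carrier G"
    using h subgroup.mem_carrier[OF assms(1)] by auto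
  show "s1 \<otimes> s2 \<notin> g <# H"
  proof
    assume "s1 \<otimes> s2 \<in> g <# H"
    then obtain h3 where h3: "h3 \<in> H" "s1 \<otimes> s2 = g \<otimes> h3"
      unfolding l_coset_def by auto
    have h3c: "h3 \<in> carrier G"
      using h3 subgroup.mem_carrier[OF assms(1)] by auto
    have "g \<otimes> (h1 \<otimes> g \<otimes> h2) = g \<otimes> h3"
      using h3 h hc assms(2) by (simp add: m_assoc)
    then have "h1 \<otimes> g \<otimes> h2 = h3"
      using hc h3c assms(2) by (metis l_cancel m_closed)
    then have "g = inv h1 \<otimes> h3 \<otimes> inv h2"
      using hc h3c assms(2) by (metis inv_solve_left inv_solve_right m_closed inv_closed m_assoc)
    moreover have "inv h1 \<otimes> h3 \<otimes> inv h2 \<in> H"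
      using h h3 assms(1) by (simp add: subgroup.m_closed subgroup.m_inv_closed)
    ultimately show False
      using assms(3) by simp
  qed
qed

lemma lcos_lcos_assoc:
  assumes "subgroup H G" "g \<in> carrier G" "h \<in> carrier G" "C \<in> lcosets H"
  shows "g <# (h <# C) = (g \<otimes> h) <# C"
  using lcos_m_assoc subgroup.lcosets_carrier[OF assms(1) is_group assms(4)] assms(2,3) by blast

lemma lcos_in_lcosets_of_lcosets:
  assumes "subgroup H G" "g \<in> carrier G" "C \<in> lcosets H"
  shows "g <# C \<in> lcosets H"
proof -
  obtain a where a: "a \<in> carrier G" "C = a <# H" using assms(3) unfolding LCOSETS_def by auto
  then show ?thesis
    using lcos_m_assoc[OF subgroup.subset[OF assms(1)] assms(2) a(1)] lcos_in_lcosets assms(2) by simp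
qed

lemma inv_lcos_lcos:
  assumes "subgroup H G" "g \<in> carrier G" "C \<in> lcosets H"
  shows "inv g <# (g <# C) = C"
  using lcos_lcos_assoc[OF assms(1) inv_closed[OF assms(2)] assms(2,3)]
    lcos_mult_one subgroup.lcosets_carrier[OF assms(1) is_group assms(3)] assms(2) by simp

lemma lcos_inv_lcos:
  assumes "subgroup H G" "g \<in> carrier G" "C \<in> lcosets H"
  shows "g <# (inv g <# C) = C"
  using inv_lcos_lcos[OF assms(1) inv_closed[OF assms(2)] assms(3)] assms(2) by simp

lemma bij_betw_lcos_lcosets:
  assumes "subgroup H G" "g \<in> carrier G"
  shows "bij_betw (\<lambda>C. g <# C) (lcosets H) (lcosets H)"
  by (rule bij_betw_byWitness[where f' = "\<lambda>C. inv g <# C"])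
    (use assms inv_lcos_lcos lcos_inv_lcos lcos_in_lcosets_of_lcosets in auto)

lemma card_carrier_le_double:
  assumes fin: "finite (carrier G)" and L: "subgroup L G"
    and outside: "\<And>a b. a \<in> carrier G \<Longrightarrow> b \<in> carrier G \<Longrightarrow> a \<notin> L \<Longrightarrow> b \<notin> L \<Longrightarrow> inv a \<otimes> b \<in> L"
  shows "card (carrier G) \<le> 2 * card L"
proof (cases "L = carrier G")
  case False
  then obtain h where h: "h \<in> carrier G" "h \<notin> L"
    using subgroup.subset[OF L] by blast
  have "carrier G \<subseteq> L \<union> (h <# L)"
  proof
    fix a assume a: "a \<in> carrier G"
    show "a \<in> L \<union> (h <# L)"
    proof (cases "a \<in> L")
      case False
      have "a = h \<otimes> (inv h \<otimes> a)"
        using h(1) a by (simp add: m_assoc[symmetric])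
      then show ?thesis
        using outside[OF h(1) a h(2) False] unfolding l_coset_def by blast
    qed simp
  qed
  moreover have "L \<union> (h <# L) \<subseteq> carrier G"
    using subgroup.subset[OF L] l_coset_subset_G[OF _ h(1)] by blast
  ultimately have "card (carrier G) = card (L \<union> (h <# L))"
    by (metis subset_antisym)
  also have "\<dots> \<le> card L + card (h <# L)"
    by (rule card_Un_le)
  also have "\<dots> = 2 * card L"
    using card_lcos[OF fin subgroup.subset[OF L] h(1)] by simp
  finally show ?thesis .
qed simp

lemma subgroup_of_index_le_two_eq_carrier:
  assumes fin: "finite (carrier G)"
    and index_3: "\<forall>M. maximal_subgroup G M \<longrightarrow> card (nontrivial_cosets G M) = 2"
    and L: "subgroup L G" "card (carrier G) \<le> 2 * card L"
  shows "L = carrier G"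
proof (rule ccontr)
  assume "L \<noteq> carrier G"
  then obtain M where M: "maximal_subgroup G M" "L \<subseteq> M"
    using exists_maximal_subgroup_superset[OF fin L(1)] by blast
  have sM: "subgroup M G"
    using M(1) unfolding maximal_subgroup_def by blast
  have fin_M: "finite M"
    using finite_subset[OF subgroup.subset[OF sM] fin] .
  have "card (carrier G) = 3 * card M"
    using card_carrier_of_two_nontrivial_cosets(2)[OF fin sM] index_3 M(1) by blast
  moreover have "card L \<le> card M"
    using card_mono[OF fin_M M(2)] .
  ultimately have "card M = 0"
    using L(2) by simp
  then show False
    using fin_M subgroup.one_closed[OF sM] by simp
qed

lemma rotation_on_lcosets_maximal_subgroup:
  assumes fin: "finite (carrier G)"
    and index_3: "\<forall>M. maximal_subgroup G M \<longrightarrow> card (nontrivial_cosets G M) = 2"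
    and M: "maximal_subgroup G M" and g: "g \<in> carrier G"
  shows "rotation_on (\<lambda>C. g <# C) (lcosets M)"
proof -
  have sM: "subgroup M G"
    using M unfolding maximal_subgroup_def by blast
  have card_M: "card (lcosets M) = 3"
    using card_carrier_of_two_nontrivial_cosets(1)[OF fin sM] index_3 M by blast
  define rot where "rot x \<longleftrightarrow> rotation_on (\<lambda>C. x <# C) (lcosets M)" for x
  have rot_mult: "rot (x \<otimes> y) \<longleftrightarrow> (rot x \<longleftrightarrow> rot y)"
    if "x \<in> carrier G" "y \<in> carrier G" for x y
  proof -
    have "rot (x \<otimes> y) \<longleftrightarrow> rotation_on (\<lambda>C. x <# (y <# C)) (lcosets M)"
      unfolding rot_def using lcos_lcos_assoc[OF sM that] by (intro rotation_on_cong) simp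
    then show ?thesis
      unfolding rot_def
      using rotation_on_comp_iff[OF card_M bij_betw_lcos_lcosets[OF sM] bij_betw_lcos_lcosets[OF sM]] that
      by blast
  qed
  have rot_one: "rot \<one>"
    unfolding rot_def rotation_on_def
    using lcos_mult_one subgroup.lcosets_carrier[OF sM is_group] by blast
  have rot_inv: "rot (inv x) \<longleftrightarrow> rot x" if "x \<in> carrier G" for x
    using rot_mult[OF inv_closed that, OF that] rot_one that by simp
  define L where "L = {x \<in> carrier G. rot x}"
  have sL: "subgroup L G"
  proof (rule subgroupI)
    show "L \<subseteq> carrier G" "L \<noteq> {}"
      using rot_one unfolding L_def by auto
    show "inv x \<in> L" if "x \<in> L" for x
      using that rot_inv unfolding L_def by simp
    show "x \<otimes> y \<in> L" if "x \<in> L" "y \<in> L" for x y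
      using that rot_mult unfolding L_def by simp
  qed
  have "card (carrier G) \<le> 2 * card L"
  proof (rule card_carrier_le_double[OF fin sL])
    fix a b assume "a \<in> carrier G" "b \<in> carrier G" "a \<notin> L" "b \<notin> L"
    then show "inv a \<otimes> b \<in> L"
      using rot_mult[OF inv_closed] rot_inv unfolding L_def by simp
  qed
  then have "L = carrier G"
    by (rule subgroup_of_index_le_two_eq_carrier[OF fin index_3 sL])
  then show ?thesis
    using g unfolding L_def rot_def by blast
qed

lemma cube_and_commutator_mem_maximal_subgroup:
  assumes fin: "finite (carrier G)"
    and index_3: "\<forall>M. maximal_subgroup G M \<longrightarrow> card (nontrivial_cosets G M) = 2"
    and M: "maximal_subgroup G M" and x: "x \<in> carrier G" and y: "y \<in> carrier G"
  shows "x [^] (3::nat) \<in> M" and "x \<otimes> y \<otimes> inv x \<otimes> inv y \<in> M"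
proof -
  have sM: "subgroup M G"
    using M unfolding maximal_subgroup_def by blast
  have card_M: "card (lcosets M) = 3"
    using card_carrier_of_two_nontrivial_cosets(1)[OF fin sM] index_3 M by blast
  have M_coset: "M \<in> lcosets M"
    using lcos_in_lcosets[OF one_closed, of M] lcos_mult_one[OF subgroup.subset[OF sM]] by simp
  note rot = rotation_on_lcosets_maximal_subgroup[OF fin index_3 M]
  note bij = bij_betw_lcos_lcosets[OF sM]
  note assoc = lcos_lcos_assoc[OF sM]
  note closed = lcos_in_lcosets_of_lcosets[OF sM]
  have "(x [^] (3::nat)) <# M = x <# (x <# (x <# M))"
    using x M_coset by (simp add: numeral_3_eq_3 assoc closed m_assoc)
  also have "\<dots> = M"
    by (rule rotation_cube[OF card_M bij[OF x] rot[OF x] M_coset])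
  finally show "x [^] (3::nat) \<in> M"
    using lcos_eq_self_iff[OF sM] x by simp
  have "(x \<otimes> y \<otimes> inv x \<otimes> inv y) <# M = x <# (y <# (inv x <# (inv y <# M)))"
    using x y M_coset by (simp add: assoc closed m_assoc)
  also have "y <# (inv x <# (inv y <# M)) = inv x <# (y <# (inv y <# M))"
    using rotations_commute[OF card_M bij[OF y] bij[OF inv_closed] rot[OF y] rot[OF inv_closed]]
      closed[OF inv_closed M_coset] x y by blast
  also have "y <# (inv y <# M) = M"
    using lcos_inv_lcos[OF sM y M_coset] .
  also have "x <# (inv x <# M) = M"
    using lcos_inv_lcos[OF sM x M_coset] .
  finally show "x \<otimes> y \<otimes> inv x \<otimes> inv y \<in> M"
    using lcos_eq_self_iff[OF sM] x y by simp
qed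

lemma elementary_abelian_3_group_if_index_3_and_frattini_trivial:
  assumes fin: "finite (carrier G)"
    and index_3: "\<forall>M. maximal_subgroup G M \<longrightarrow> card (nontrivial_cosets G M) = 2"
    and frattini: "frattini G = {\<one>}"
  shows "elementary_abelian_3_group G"
proof -
  have trivial: "z = \<one>" if "z \<in> carrier G" "\<And>M. maximal_subgroup G M \<Longrightarrow> z \<in> M" for z
    using that frattini unfolding frattini_def by blast
  note mem_maximal = cube_and_commutator_mem_maximal_subgroup[OF fin index_3]
  have "x \<otimes> y = y \<otimes> x" if "x \<in> carrier G" "y \<in> carrier G" for x y
  proof -
    have "x \<otimes> y \<otimes> inv x \<otimes> inv y = \<one>"
      using trivial mem_maximal(2) that by simp
    then show ?thesis
      using that by (metis inv_closed inv_equality inv_inv m_assoc m_closed r_inv r_one)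
  qed
  moreover have "x [^] (3::nat) = \<one>" if "x \<in> carrier G" for x
    using trivial mem_maximal(1) that by simp
  ultimately show ?thesis
    unfolding elementary_abelian_3_group_def using group_comm_groupI by blast
qed

end

locale exp3_comm_group = comm_group G for G (structure) +
  assumes finite_carrier: "finite (carrier G)"
    and cube_eq_one: "x \<in> carrier G \<Longrightarrow> x [^] (3::nat) = \<one>"
begin

lemma cube_eq_one': "x \<in> carrier G \<Longrightarrow> x \<otimes> x \<otimes> x = \<one>"
  using cube_eq_one[of x] by (simp add: numeral_3_eq_3)

lemma inv_eq_square: "x \<in> carrier G \<Longrightarrow> inv x = x \<otimes> x"
  using cube_eq_one' by (intro inv_equality) auto

lemma square_square: "x \<in> carrier G \<Longrightarrow> x \<otimes> x \<otimes> (x \<otimes> x) = x"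
  using cube_eq_one'[of x] by (simp add: m_assoc[symmetric])

lemma nat_pow_mod_3: "x \<in> carrier G \<Longrightarrow> x [^] (n::nat) = x [^] (n mod 3)"
proof -
  assume x: "x \<in> carrier G"
  have "x [^] n = x [^] (3 * (n div 3)) \<otimes> x [^] (n mod 3)"
    using nat_pow_mult[OF x, of "3 * (n div 3)" "n mod 3"] by simp
  also have "x [^] (3 * (n div 3)) = \<one>"
    using nat_pow_pow[OF x, of 3 "n div 3"] cube_eq_one[OF x] by simp
  finally show ?thesis
    using x by simp
qed

definition adjoin :: "'a set \<Rightarrow> 'a \<Rightarrow> 'a set" where
  "adjoin M k = {k [^] (i::nat) \<otimes> m | i m. m \<in> M}"

lemma subgroup_adjoin:
  assumes M: "subgroup M G" and k: "k \<in> carrier G"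
  shows "subgroup (adjoin M k) G"
proof (rule subgroupI)
  have Mc: "\<And>m. m \<in> M \<Longrightarrow> m \<in> carrier G"
    using subgroup.mem_carrier[OF M] .
  show "adjoin M k \<subseteq> carrier G"
    unfolding adjoin_def using Mc k by auto
  have "k [^] (0::nat) \<otimes> \<one> \<in> adjoin M k"
    unfolding adjoin_def using subgroup.one_closed[OF M] by blast
  then show "adjoin M k \<noteq> {}" by blast
  fix a assume "a \<in> adjoin M k"
  then obtain i m where a: "a = k [^] (i::nat) \<otimes> m" "m \<in> M"
    unfolding adjoin_def by blast
  have "inv a = k [^] (i + i) \<otimes> inv m"
    using a Mc k inv_eq_square[of "k [^] i"] by (simp add: inv_mult nat_pow_mult)
  then show "inv a \<in> adjoin M k"
    unfolding adjoin_def using subgroup.m_inv_closed[OF M a(2)] by blast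
next
  fix a b assume "a \<in> adjoin M k" "b \<in> adjoin M k"
  then obtain i m j n where a: "a = k [^] (i::nat) \<otimes> m" "m \<in> M"
    and b: "b = k [^] (j::nat) \<otimes> n" "n \<in> M"
    unfolding adjoin_def by blast
  have "a \<otimes> b = k [^] (i + j) \<otimes> (m \<otimes> n)"
    using a b subgroup.mem_carrier[OF M] k by (simp add: m_ac nat_pow_mult[symmetric])
  then show "a \<otimes> b \<in> adjoin M k"
    unfolding adjoin_def using subgroup.m_closed[OF M a(2) b(2)] by blast
qed

lemma subset_adjoin: "subgroup M G \<Longrightarrow> M \<subseteq> adjoin M k"
proof
  fix m assume "subgroup M G" "m \<in> M"
  then have "m = k [^] (0::nat) \<otimes> m"
    using subgroup.mem_carrier by fastforce
  then show "m \<in> adjoin M k"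
    unfolding adjoin_def using \<open>m \<in> M\<close> by blast
qed

lemma mem_adjoin: "subgroup M G \<Longrightarrow> k \<in> carrier G \<Longrightarrow> k \<in> adjoin M k"
  unfolding adjoin_def by (force intro!: exI[of _ "1::nat"] dest: subgroup.one_closed)

lemma adjoin_subset:
  assumes K: "subgroup K G" "M \<subseteq> K" "k \<in> K"
  shows "adjoin M k \<subseteq> K"
proof
  fix x assume "x \<in> adjoin M k"
  then obtain i m where x: "x = k [^] (i::nat) \<otimes> m" "m \<in> M"
    unfolding adjoin_def by blast
  then show "x \<in> K"
    using K subgroup.m_closed[OF K(1)] subgroup_nat_pow_closed[OF K(1)] by blast
qed

lemma square_notin_subgroup:
  assumes M: "subgroup M G" and x: "x \<in> carrier G" "x \<notin> M"
  shows "x \<otimes> x \<notin> M"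
proof
  assume "x \<otimes> x \<in> M"
  then have "x \<otimes> x \<otimes> (x \<otimes> x) \<in> M"
    using subgroup.m_closed[OF M] by blast
  then show False
    using square_square[OF x(1)] x(2) by simp
qed

lemma lcos_cases_of_mem_adjoin:
  assumes M: "subgroup M G" and k: "k \<in> carrier G" and y: "y \<in> adjoin M k"
  shows "y <# M = M \<or> y <# M = k <# M \<or> y <# M = (k \<otimes> k) <# M"
proof -
  obtain i m where y: "y = k [^] (i::nat) \<otimes> m" "m \<in> M"
    using y unfolding adjoin_def by blast
  have m: "m \<in> carrier G"
    using y(2) subgroup.mem_carrier[OF M] by blast
  have "inv (k [^] i) \<otimes> (k [^] i \<otimes> m) = m"
    using k m by (simp add: m_assoc[symmetric])
  then have "y <# M = k [^] (i mod 3) <# M"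
    using lcos_eq_lcos_iff[OF M, of "k [^] i" y] y k m nat_pow_mod_3[OF k, of i] by simp
  moreover have "i mod 3 = 0 \<or> i mod 3 = 1 \<or> i mod 3 = 2"
    by arith
  ultimately show ?thesis
    using k lcos_mult_one[OF subgroup.subset[OF M]] by (auto simp: numeral_2_eq_2)
qed

lemma nontrivial_cosets_maximal_subgroup:
  assumes M: "maximal_subgroup G M" and x: "x \<in> carrier G" "x \<notin> M"
  shows "nontrivial_cosets G M = {x <# M, (x \<otimes> x) <# M}"
proof
  have sM: "subgroup M G"
    using M unfolding maximal_subgroup_def by blast
  have "adjoin M x = M \<or> adjoin M x = carrier G"
    using M subgroup_adjoin[OF sM x(1)] subset_adjoin[OF sM] unfolding maximal_subgroup_def by blast
  then have adjoin_x: "adjoin M x = carrier G"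
    using mem_adjoin[OF sM x(1)] x(2) by blast
  show "nontrivial_cosets G M \<subseteq> {x <# M, (x \<otimes> x) <# M}"
  proof
    fix C assume "C \<in> nontrivial_cosets G M"
    then obtain g where g: "C = g <# M" "g \<in> carrier G" "g \<notin> M"
      unfolding nontrivial_cosets_def by blast
    then show "C \<in> {x <# M, (x \<otimes> x) <# M}"
      using lcos_cases_of_mem_adjoin[OF sM x(1), of g] lcos_eq_self_iff[OF sM g(2)] adjoin_x by auto
  qed
  show "{x <# M, (x \<otimes> x) <# M} \<subseteq> nontrivial_cosets G M"
    unfolding nontrivial_cosets_def using x square_notin_subgroup[OF sM x] by auto
qed

lemma card_nontrivial_cosets_maximal_subgroup:
  assumes M: "maximal_subgroup G M"
  shows "card (nontrivial_cosets G M) = 2" and "card (carrier G) = 3 * card M"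
proof -
  have sM: "subgroup M G"
    using M unfolding maximal_subgroup_def by blast
  obtain x where x: "x \<in> carrier G" "x \<notin> M"
    using M subgroup.subset[OF sM] unfolding maximal_subgroup_def by blast
  have "inv x \<otimes> (x \<otimes> x) = x"
    using x(1) by (simp add: m_assoc[symmetric])
  then have "x <# M \<noteq> (x \<otimes> x) <# M"
    using lcos_eq_lcos_iff[OF sM x(1)] x by simp
  then show two: "card (nontrivial_cosets G M) = 2"
    using nontrivial_cosets_maximal_subgroup[OF M x] by simp
  show "card (carrier G) = 3 * card M"
    using card_carrier_of_two_nontrivial_cosets(2)[OF finite_carrier sM two] .
qed

lemma sum_free_translates_disjoint:
  assumes T: "sum_free G T" and s: "s \<in> T"
  shows "T \<inter> (\<lambda>t. s \<otimes> t) ` T = {}"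
    and "(T \<union> (\<lambda>t. s \<otimes> t) ` T) \<inter> (\<lambda>t. s \<otimes> inv t) ` T = {}"
proof -
  have Tc: "T \<subseteq> carrier G" and sf: "\<And>a b. a \<in> T \<Longrightarrow> b \<in> T \<Longrightarrow> a \<otimes> b \<notin> T"
    using T unfolding sum_free_def by auto
  have sc: "s \<in> carrier G"
    using s Tc by blast
  show "T \<inter> (\<lambda>t. s \<otimes> t) ` T = {}"
    using sf[OF s] by auto
  show "(T \<union> (\<lambda>t. s \<otimes> t) ` T) \<inter> (\<lambda>t. s \<otimes> inv t) ` T = {}"
  proof (rule ccontr)
    assume "(T \<union> (\<lambda>t. s \<otimes> t) ` T) \<inter> (\<lambda>t. s \<otimes> inv t) ` T \<noteq> {}"
    then obtain v where v: "v \<in> T \<union> (\<lambda>t. s \<otimes> t) ` T" "v \<in> (\<lambda>t. s \<otimes> inv t) ` T"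
      by auto
    then obtain u where u: "u \<in> T" "s \<otimes> inv u \<in> T \<union> (\<lambda>t. s \<otimes> t) ` T"
      by (auto simp del: Un_iff)
    have uc: "u \<in> carrier G"
      using u Tc by blast
    show False
    proof (cases "s \<otimes> inv u \<in> T")
      case True
      have "(s \<otimes> inv u) \<otimes> u = s"
        using sc uc by (simp add: m_assoc)
      then show False
        using sf[OF True u(1)] s by simp
    next
      case False
      then obtain t where t: "t \<in> T" "s \<otimes> inv u = s \<otimes> t"
        using u by blast
      then have "inv u = t"
        using l_cancel[OF t(2) inv_closed[OF uc] _ sc] Tc by blast
      then have "u \<otimes> u = t"
        using inv_eq_square[OF uc] by simp
      then show False
        using sf[OF u(1) u(1)] t by simp
    qed
  qed
qed

lemma card_sum_free_translates:
  assumes T: "sum_free G T" and s: "s \<in> T"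
  shows "card (T \<union> (\<lambda>t. s \<otimes> t) ` T \<union> (\<lambda>t. s \<otimes> inv t) ` T) = 3 * card T"
proof -
  have Tc: "T \<subseteq> carrier G"
    using T unfolding sum_free_def by auto
  have sc: "s \<in> carrier G"
    using s Tc by blast
  have fin_T: "finite T"
    using Tc finite_carrier finite_subset by blast
  define B where "B = (\<lambda>t. s \<otimes> t) ` T"
  define C where "C = (\<lambda>t. s \<otimes> inv t) ` T"
  have "inj_on (\<lambda>t. s \<otimes> t) T"
    using inj_on_subset[OF inj_on_cmult[OF sc] Tc] .
  then have card_B: "card B = card T"
    unfolding B_def by (rule card_image)
  have "inj_on (\<lambda>t. s \<otimes> inv t) T"
  proof (rule inj_onI)
    fix t u assume "t \<in> T" "u \<in> T" "s \<otimes> inv t = s \<otimes> inv u"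
    then show "t = u"
      using Tc sc by (metis inv_closed inv_inv l_cancel subsetD)
  qed
  then have card_C: "card C = card T"
    unfolding C_def by (rule card_image)
  have TB: "T \<inter> B = {}" and TBC: "(T \<union> B) \<inter> C = {}"
    unfolding B_def C_def using sum_free_translates_disjoint[OF T s] .
  have "card (T \<union> B \<union> C) = card T + card B + card C"
    using card_Un_disjoint[OF _ _ TBC] card_Un_disjoint[OF _ _ TB] fin_T
    unfolding B_def C_def by simp
  then show ?thesis
    using card_B card_C unfolding B_def C_def by simp
qed

lemma sum_free_translates_subset:
  assumes "sum_free G T" "s \<in> T"
  shows "T \<union> (\<lambda>t. s \<otimes> t) ` T \<union> (\<lambda>t. s \<otimes> inv t) ` T \<subseteq> carrier G"
  using assms unfolding sum_free_def by auto

lemma card_sum_free_le: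
  assumes T: "sum_free G T"
  shows "3 * card T \<le> card (carrier G)"
proof -
  obtain s where s: "s \<in> T"
    using T unfolding sum_free_def by blast
  show ?thesis
    using card_mono[OF finite_carrier sum_free_translates_subset[OF T s]] card_sum_free_translates[OF T s]
    by simp
qed

lemma inv_mult_mem_sum_free:
  assumes S: "sum_free G S" and card_S: "3 * card S = card (carrier G)" and s: "s \<in> S" and t: "t \<in> S"
  shows "inv (s \<otimes> t) \<in> S"
proof -
  have Sc: "S \<subseteq> carrier G" and sf: "\<And>a b. a \<in> S \<Longrightarrow> b \<in> S \<Longrightarrow> a \<otimes> b \<notin> S"
    using S unfolding sum_free_def by auto
  have sc: "s \<in> carrier G" and tc: "t \<in> carrier G"
    using s t Sc by auto
  define x where "x = inv (s \<otimes> t)"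
  have xc: "x \<in> carrier G"
    unfolding x_def using sc tc by simp
  have "carrier G = S \<union> (\<lambda>t. s \<otimes> t) ` S \<union> (\<lambda>t. s \<otimes> inv t) ` S"
    using card_subset_eq[OF finite_carrier sum_free_translates_subset[OF S s]]
      card_sum_free_translates[OF S s] card_S by simp
  then have "x \<in> S \<union> (\<lambda>t. s \<otimes> t) ` S \<union> (\<lambda>t. s \<otimes> inv t) ` S"
    using xc by simp
  moreover have "x \<notin> (\<lambda>t. s \<otimes> t) ` S"
  proof
    assume "x \<in> (\<lambda>t. s \<otimes> t) ` S"
    then obtain u where u: "u \<in> S" "x = s \<otimes> u" by blast
    have uc: "u \<in> carrier G"
      using u Sc by auto
    have "u \<otimes> t = inv s \<otimes> (inv s \<otimes> inv t) \<otimes> t"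
      using inv_solve_left[OF uc sc xc] u(2) sc tc unfolding x_def by (simp add: inv_mult)
    also have "\<dots> = s"
      using sc tc inv_eq_square[OF sc] square_square[OF sc] by (simp add: m_assoc)
    finally show False
      using sf[OF u(1) t] s by simp
  qed
  moreover have "x \<notin> (\<lambda>t. s \<otimes> inv t) ` S"
  proof
    assume "x \<in> (\<lambda>t. s \<otimes> inv t) ` S"
    then obtain u where u: "u \<in> S" "x = s \<otimes> inv u" by blast
    have uc: "u \<in> carrier G"
      using u Sc by auto
    have "inv u = inv s \<otimes> x"
      using inv_solve_left[OF inv_closed[OF uc] sc xc] u(2) by simp
    then have "u = s \<otimes> (s \<otimes> t)"
      using uc sc tc unfolding x_def by (metis inv_inv inv_mult m_closed inv_closed)
    then have "s \<otimes> u = t"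
      using cube_eq_one'[OF sc] sc tc by (simp add: m_assoc[symmetric])
    then show False
      using sf[OF s u(1)] t by simp
  qed
  ultimately show ?thesis
    unfolding x_def by blast
qed

lemma subgroup_inv_lcos_sum_free:
  assumes S: "sum_free G S" and card_S: "3 * card S = card (carrier G)" and a: "a \<in> S"
  shows "subgroup (inv a <# S) G"
proof -
  have Sc: "S \<subseteq> carrier G"
    using S unfolding sum_free_def by auto
  have ac: "a \<in> carrier G"
    using a Sc by auto
  have H: "inv a <# S = (\<lambda>s. inv a \<otimes> s) ` S"
    unfolding l_coset_def by auto
  have H_mult: "x \<otimes> y \<in> inv a <# S" if xy: "x \<in> inv a <# S" "y \<in> inv a <# S" for x y
  proof -
    obtain s t where st: "s \<in> S" "t \<in> S" "x = inv a \<otimes> s" "y = inv a \<otimes> t"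
      using xy unfolding H by blast
    have sc: "s \<in> carrier G" and tc: "t \<in> carrier G"
      using st Sc by auto
    have "inv (inv (s \<otimes> t) \<otimes> a) \<in> S"
      using inv_mult_mem_sum_free[OF S card_S inv_mult_mem_sum_free[OF S card_S st(1,2)] a] .
    then have "s \<otimes> t \<otimes> inv a \<in> S"
      using sc tc ac by (simp add: inv_mult)
    moreover have "x \<otimes> y = inv a \<otimes> (s \<otimes> t \<otimes> inv a)"
      unfolding st using sc tc ac by (simp add: m_ac)
    ultimately show ?thesis
      unfolding H by blast
  qed
  show ?thesis
  proof (rule subgroupI)
    show sub: "inv a <# S \<subseteq> carrier G"
      unfolding H using Sc ac by auto
    show "inv a <# S \<noteq> {}"
      unfolding H using a by blast
    show "inv x \<in> inv a <# S" if "x \<in> inv a <# S" for x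
      using inv_eq_square[of x] that sub H_mult[OF that that] by auto
    show "x \<otimes> y \<in> inv a <# S" if "x \<in> inv a <# S" "y \<in> inv a <# S" for x y
      using H_mult[OF that] .
  qed
qed

lemma sum_free_eq_lcos:
  assumes S: "sum_free G S" and card_S: "3 * card S = card (carrier G)"
  obtains a H where "subgroup H G" "a \<in> carrier G" "a \<notin> H" "S = a <# H"
    "card (carrier G) = 3 * card H"
proof -
  have Sc: "S \<subseteq> carrier G" and sf: "\<And>a b. a \<in> S \<Longrightarrow> b \<in> S \<Longrightarrow> a \<otimes> b \<notin> S"
    using S unfolding sum_free_def by auto
  obtain a where a: "a \<in> S"
    using S unfolding sum_free_def by blast
  have ac: "a \<in> carrier G"
    using a Sc by auto
  define H where "H = inv a <# S"
  have sH: "subgroup H G"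
    unfolding H_def by (rule subgroup_inv_lcos_sum_free[OF S card_S a])
  have "a \<notin> H"
  proof
    assume "a \<in> H"
    then obtain s where s: "s \<in> S" "a = inv a \<otimes> s"
      unfolding H_def l_coset_def by blast
    then have "s = a \<otimes> a"
      using inv_solve_left[OF ac ac] Sc by auto
    then show False
      using sf[OF a a] s(1) by simp
  qed
  moreover have "a <# H = S"
    unfolding H_def using lcos_m_assoc[OF Sc ac inv_closed[OF ac]] lcos_mult_one[OF Sc] ac by simp
  moreover have "card H = card S"
    unfolding H_def by (rule card_lcos[OF finite_carrier Sc inv_closed[OF ac]])
  ultimately show thesis
    using that[OF sH ac] card_S by simp
qed

lemma mem_adjoin_swap:
  assumes M: "subgroup M G" and y: "y \<in> carrier G" and x: "x \<in> adjoin M y" "x \<notin> M"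
  shows "y \<in> adjoin M x"
proof -
  obtain i m where im: "x = y [^] (i::nat) \<otimes> m" "m \<in> M"
    using x(1) unfolding adjoin_def by blast
  have m: "m \<in> carrier G"
    using im(2) subgroup.mem_carrier[OF M] by blast
  have xc: "x \<in> carrier G"
    using im y m by simp
  have "y [^] i = x \<otimes> inv m"
    using im(1) y m by (simp add: m_assoc)
  moreover have "x \<otimes> inv m \<in> adjoin M x"
    using subgroup.m_closed[OF subgroup_adjoin[OF M xc] mem_adjoin[OF M xc]]
      subset_adjoin[OF M] subgroup.m_inv_closed[OF M im(2)] by blast
  ultimately have pow_mem: "(y [^] i) [^] i \<in> adjoin M x"
    using subgroup_nat_pow_closed[OF subgroup_adjoin[OF M xc]] by simp
  have "i mod 3 \<noteq> 0"
  proof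
    assume "i mod 3 = 0"
    then have "y [^] i = \<one>"
      using nat_pow_mod_3[OF y, of i] by simp
    then show False
      using im x(2) m by simp
  qed
  then have "i mod 3 = 1 \<or> i mod 3 = 2"
    by arith
  moreover have "(i * i) mod 3 = ((i mod 3) * (i mod 3)) mod 3"
    by (simp add: mod_mult_eq)
  ultimately have "(i * i) mod 3 = 1"
    by auto
  then have "(y [^] i) [^] i = y"
    using nat_pow_pow[OF y] nat_pow_mod_3[OF y, of "i * i"] y by simp
  then show ?thesis
    using pow_mem by simp
qed

lemma adjoin_eq_carrier_if_larger_subgroups_contain:
  assumes M: "subgroup M G" and x: "x \<in> carrier G" "x \<notin> M"
    and larger: "\<And>K. subgroup K G \<Longrightarrow> M \<subseteq> K \<Longrightarrow> K \<noteq> M \<Longrightarrow> x \<in> K"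
  shows "adjoin M x = carrier G"
proof (rule subset_antisym)
  show "adjoin M x \<subseteq> carrier G"
    using subgroup.subset[OF subgroup_adjoin[OF M x(1)]] .
  show "carrier G \<subseteq> adjoin M x"
  proof
    fix y assume y: "y \<in> carrier G"
    show "y \<in> adjoin M x"
    proof (cases "adjoin M y = M")
      case True
      then show ?thesis
        using mem_adjoin[OF M y] subset_adjoin[OF M] by blast
    next
      case False
      then have "x \<in> adjoin M y"
        using larger[OF subgroup_adjoin[OF M y] subset_adjoin[OF M]] by blast
      then show ?thesis
        using mem_adjoin_swap[OF M y _ x(2)] by blast
    qed
  qed
qed

lemma exists_maximal_subgroup_not_mem:
  assumes x: "x \<in> carrier G" "x \<noteq> \<one>"
  obtains M where "maximal_subgroup G M" "x \<notin> M"
proof -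
  have "x \<notin> {\<one>}"
    using x(2) by simp
  then obtain M where M: "subgroup M G" "x \<notin> M" "{\<one>} \<subseteq> M"
    and M_max: "\<And>K. subgroup K G \<Longrightarrow> x \<notin> K \<Longrightarrow> M \<subseteq> K \<Longrightarrow> K = M"
    by (rule exists_inclusion_maximal_subgroup[OF finite_carrier triv_subgroup, where P = "\<lambda>K. x \<notin> K"]) blast
  have larger: "x \<in> K" if "subgroup K G" "M \<subseteq> K" "K \<noteq> M" for K
    using M_max that by blast
  have "maximal_subgroup G M"
    unfolding maximal_subgroup_def
  proof (intro conjI allI impI)
    show "M \<noteq> carrier G"
      using M(2) x(1) by blast
    fix K assume K: "subgroup K G \<and> M \<subseteq> K"
    show "K = M \<or> K = carrier G"
    proof (cases "K = M")
      case False
      then have "adjoin M x \<subseteq> K"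
        using K larger adjoin_subset by blast
      then show ?thesis
        using adjoin_eq_carrier_if_larger_subgroups_contain[OF M(1) x(1) M(2) larger] K subgroup.subset
        by blast
    qed simp
  qed (rule M(1))
  then show thesis
    using that M(2) by blast
qed

lemma frattini_eq_one: "frattini G = {\<one>}"
proof -
  have "x \<notin> frattini G" if "x \<in> carrier G" "x \<noteq> \<one>" for x
    using exists_maximal_subgroup_not_mem[OF that] unfolding frattini_def by blast
  moreover have "\<one> \<in> frattini G"
    unfolding frattini_def maximal_subgroup_def using subgroup.one_closed by blast
  ultimately show ?thesis
    unfolding frattini_def by blast
qed

lemma max_sum_free_nontrivial_coset:
  assumes M: "maximal_subgroup G M" and C: "C \<in> nontrivial_cosets G M"
  shows "max_sum_free G C"
proof -
  have sM: "subgroup M G"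
    using M unfolding maximal_subgroup_def by blast
  obtain g where g: "C = g <# M" "g \<in> carrier G" "g \<notin> M"
    using C unfolding nontrivial_cosets_def by blast
  have "card C = card M"
    using g card_lcos[OF finite_carrier subgroup.subset[OF sM]] by simp
  then have "card T \<le> card C" if "sum_free G T" for T
    using card_sum_free_le[OF that] card_nontrivial_cosets_maximal_subgroup(2)[OF M] by simp
  then show ?thesis
    unfolding max_sum_free_def using sum_free_lcos[OF sM g(2,3)] g(1) by blast
qed

lemma max_sum_free_in_nontrivial_cosets:
  assumes S: "max_sum_free G S"
  obtains M where "maximal_subgroup G M" "S \<in> nontrivial_cosets G M"
proof -
  have sf: "sum_free G S" and S_max: "\<And>T. sum_free G T \<Longrightarrow> card T \<le> card S"
    using S unfolding max_sum_free_def by auto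
  obtain s where s: "s \<in> S" "s \<in> carrier G"
    using sf unfolding sum_free_def by blast
  then have "s \<noteq> \<one>"
    using sf unfolding sum_free_def by force
  then obtain M where M: "maximal_subgroup G M"
    using exists_maximal_subgroup_not_mem[OF s(2)] by blast
  have sM: "subgroup M G"
    using M unfolding maximal_subgroup_def by blast
  obtain x where x: "x \<in> carrier G" "x \<notin> M"
    using M subgroup.subset[OF sM] unfolding maximal_subgroup_def by blast
  have "card M \<le> card S"
    using S_max[OF sum_free_lcos[OF sM x]] card_lcos[OF finite_carrier subgroup.subset[OF sM] x(1)]
    by simp
  then have "3 * card S = card (carrier G)"
    using card_nontrivial_cosets_maximal_subgroup(2)[OF M] card_sum_free_le[OF sf] by simp
  then obtain a H where H: "subgroup H G" "a \<in> carrier G" "a \<notin> H" "S = a <# H"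
    "card (carrier G) = 3 * card H"
    using sum_free_eq_lcos[OF sf] by blast
  have "maximal_subgroup G H"
    using maximal_subgroup_of_prime_index[OF finite_carrier _ H(1,5)] by simp
  moreover have "S \<in> nontrivial_cosets G H"
    unfolding nontrivial_cosets_def using H by blast
  ultimately show thesis
    using that by blast
qed

end

theorem theorem1:
  fixes G (structure)
  assumes "group G" and "finite (carrier G)"
  shows "elementary_abelian_3_group G \<longleftrightarrow>
    ((\<forall>M. maximal_subgroup G M \<longrightarrow>
        card (nontrivial_cosets G M) = 2 \<and>
        (\<forall>C\<in>nontrivial_cosets G M. max_sum_free G C)) \<and>
     (\<forall>S. max_sum_free G S \<longrightarrow>
        (\<exists>M. maximal_subgroup G M \<and> S \<in> nontrivial_cosets G M)) \<and>
     frattini G = {\<one>})"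
  (is "_ \<longleftrightarrow> ?conditions")
proof
  assume "elementary_abelian_3_group G"
  then interpret exp3_comm_group G
    using assms(2) unfolding elementary_abelian_3_group_def exp3_comm_group_def exp3_comm_group_axioms_def
    by blast
  show ?conditions
    using card_nontrivial_cosets_maximal_subgroup(1) max_sum_free_nontrivial_coset
      max_sum_free_in_nontrivial_cosets frattini_eq_one by blast
next
  assume ?conditions
  then show "elementary_abelian_3_group G"
    using group.elementary_abelian_3_group_if_index_3_and_frattini_trivial[OF assms] by blast
qed

end
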